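(* Let $n\ge 4$. The number of semimagic quad squares using the EvenQuads-$2^n$ deck equals $2^n(2^n-1)(2^n-2)(2^n-4)(2^n-8)$ times the number of semimagic quad squares of type C in that deck. The same holds with "semimagic" replaced by "magic", and with "semimagic" replaced by "strongly magic".
   Context: The EvenQuads-$2^n$ deck consists of $2^n$ cards identified with the integers $0,1,\dots,2^n-1$ (equivalently, via binary expansion, with the vectors of $\mathbb{Z}_2^n$). Four cards $a,b,c,d$ form a quad if and only if $a\oplus b\oplus c\oplus d=0$, where $\oplus$ denotes bitwise XOR. A quad square is a $4\times 4$ array of $16$ pairwise distinct cards of the deck. It is semimagic if each of its four rows and each of its four columns forms a quad; it is magic if, in addition, each of its two diagonals forms a quad. Index rows and columns by $0,1,2,3$; a quad square is strongly magic if for any four distinct positions $(i_1,j_1),\dots,(i_4,j_4)$ with $i_1\oplus i_2\oplus i_3\oplus i_4=0$ and $j_1\oplus j_2\oplus j_3\oplus j_4=0$, the four cards in these positions form a quad. A quad square is of type C if its first row is $0,1,2,3$ (left to right) and its first column is $0,4,8,12$ (top to bottom). *)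

theory Defs
  imports Main "HOL-Library.FuncSet"
begin

definition deck :: "nat \<Rightarrow> nat set" where
  "deck n = {0..<2^n}"

definition is_quad :: "nat \<Rightarrow> nat \<Rightarrow> nat \<Rightarrow> nat \<Rightarrow> bool" where
  "is_quad a b c d \<longleftrightarrow> xor (xor (xor a b) c) d = 0"

text \<open>Positions of a 4x4 array: (row, column) with indices 0..3.\<close>

definition positions :: "(nat \<times> nat) set" where
  "positions = {0..<4} \<times> {0..<4}"

definition quad_square :: "nat \<Rightarrow> (nat \<times> nat \<Rightarrow> nat) \<Rightarrow> bool" where
  "quad_square n Q \<longleftrightarrow> Q \<in> positions \<rightarrow>\<^sub>E deck n \<and> inj_on Q positions"

definition semimagic :: "(nat \<times> nat \<Rightarrow> nat) \<Rightarrow> bool" where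
  "semimagic Q \<longleftrightarrow>
     (\<forall>i<4. is_quad (Q (i,0)) (Q (i,1)) (Q (i,2)) (Q (i,3))) \<and>
     (\<forall>j<4. is_quad (Q (0,j)) (Q (1,j)) (Q (2,j)) (Q (3,j)))"

definition magic :: "(nat \<times> nat \<Rightarrow> nat) \<Rightarrow> bool" where
  "magic Q \<longleftrightarrow> semimagic Q \<and>
     is_quad (Q (0,0)) (Q (1,1)) (Q (2,2)) (Q (3,3)) \<and>
     is_quad (Q (0,3)) (Q (1,2)) (Q (2,1)) (Q (3,0))"

definition strongly_magic :: "(nat \<times> nat \<Rightarrow> nat) \<Rightarrow> bool" where
  "strongly_magic Q \<longleftrightarrow>
     (\<forall>p1\<in>positions. \<forall>p2\<in>positions. \<forall>p3\<in>positions. \<forall>p4\<in>positions.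
        distinct [p1, p2, p3, p4] \<and>
        xor (xor (xor (fst p1) (fst p2)) (fst p3)) (fst p4) = 0 \<and>
        xor (xor (xor (snd p1) (snd p2)) (snd p3)) (snd p4) = 0
        \<longrightarrow> is_quad (Q p1) (Q p2) (Q p3) (Q p4))"

definition type_C :: "(nat \<times> nat \<Rightarrow> nat) \<Rightarrow> bool" where
  "type_C Q \<longleftrightarrow> (\<forall>j<4. Q (0,j) = j) \<and> (\<forall>i<4. Q (i,0) = 4 * i)"

end

(*
  Maps x \<mapsto> a XOR L x, with L an XOR-linear bijection of the deck, preserve quads; relabelling
  the cards of a square by such a map therefore preserves each of the three magic properties.
  In a semimagic square the cards at (0,0), (0,1), (0,2), (1,0), (2,0) form an affine frame: every
  XOR-combination of the four differences with the corner card is the XOR of a card of the first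
  row with a card of the first column, and these are distinct unless the combination is empty.
  There are 2^n (2^n - 1) (2^n - 2) (2^n - 4) (2^n - 8) frames and an affine map carries the
  standard frame (0; 1, 2, 4, 8) to any of them, so all frames carry equally many squares; the
  squares with the standard frame are exactly those of type C.
*)

theory Submission
  imports Defs
begin

section \<open>Linear algebra over GF(2) on the deck\<close>

lemma xor_left_self_nat [simp]: "xor (x::nat) (xor x y) = y"
  by (simp flip: xor.assoc)

lemma xor_left_cancel_nat: "xor (a::nat) x = xor a y \<longleftrightarrow> x = y"
  by (metis xor_left_self_nat)

lemma xor_eq_0_iff_nat: "xor (x::nat) y = 0 \<longleftrightarrow> x = y"
  by (metis xor_left_self_nat xor_self_eq)

lemma xor_mem_deck: "x \<in> deck n \<Longrightarrow> y \<in> deck n \<Longrightarrow> xor x y \<in> deck n"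
  by (simp add: deck_def) (metis take_bit_nat_eq_self_iff take_bit_xor)

lemma zero_mem_deck [simp]: "0 \<in> deck n"
  by (simp add: deck_def)

lemma deck_Suc: "deck (Suc k) = deck k \<union> (\<lambda>z. 2 ^ k + z) ` deck k"
proof -
  have "z \<in> (\<lambda>z. 2 ^ k + z) ` deck k" if "2 ^ k \<le> z" "z < 2 ^ Suc k" for z :: nat
    using that by (intro image_eqI[of _ _ "z - 2 ^ k"]) (auto simp: deck_def)
  then show ?thesis
    by (auto simp: deck_def)
qed

lemma not_bit_deck: "z \<in> deck k \<Longrightarrow> \<not> bit z k"
  by (simp add: deck_def bit_iff_odd)

lemma bit_power_add_deck: "z \<in> deck k \<Longrightarrow> bit (2 ^ k + z) k"
  by (simp add: deck_def bit_iff_odd div_add_self1)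

(* Coefficient vectors in GF(2)^k are encoded by the bits of a number z < 2^k. *)
fun xor_comb :: "(nat \<Rightarrow> nat) \<Rightarrow> nat \<Rightarrow> nat \<Rightarrow> nat" where
  "xor_comb w 0 z = 0"
| "xor_comb w (Suc k) z = xor (if bit z k then w k else 0) (xor_comb w k z)"

lemma xor_comb_xor: "xor_comb w k (xor z z') = xor (xor_comb w k z) (xor_comb w k z')"
  by (induction k) (auto simp: bit_xor_iff ac_simps)

lemma xor_comb_fun_upd: "k \<le> i \<Longrightarrow> xor_comb (w(i := t)) k z = xor_comb w k z"
  by (induction k) auto

lemma xor_comb_cong_bits:
  "(\<And>i. i < k \<Longrightarrow> bit z i = bit z' i) \<Longrightarrow> xor_comb w k z = xor_comb w k z'"
  by (induction k) auto

lemma xor_comb_take_bit [simp]: "xor_comb w k (take_bit k z) = xor_comb w k z"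
  by (rule xor_comb_cong_bits) (simp add: bit_take_bit_iff)

lemma xor_comb_power_add: "xor_comb w k (2 ^ k + z) = xor_comb w k z"
proof -
  have "take_bit k (2 ^ k + z) = take_bit k z"
    by (simp add: take_bit_eq_mod)
  then show ?thesis
    by (metis xor_comb_take_bit)
qed

lemma xor_comb_mem_deck: "(\<And>i. i < k \<Longrightarrow> w i \<in> deck n) \<Longrightarrow> xor_comb w k z \<in> deck n"
  by (induction k) (auto intro!: xor_mem_deck)

lemma xor_comb_power: "xor_comb w k (2 ^ i) = (if i < k then w i else 0)"
  by (induction k) (auto simp: bit_exp_iff less_Suc_eq)

definition xor_indep :: "(nat \<Rightarrow> nat) \<Rightarrow> nat \<Rightarrow> bool" where
  "xor_indep w k \<longleftrightarrow> (\<forall>z\<in>deck k. xor_comb w k z = 0 \<longrightarrow> z = 0)"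

lemma xor_indep_inj_on: "xor_indep w k \<Longrightarrow> inj_on (xor_comb w k) (deck k)"
  unfolding xor_indep_def inj_on_def
  by (metis xor_comb_xor xor_eq_0_iff_nat xor_mem_deck)

lemma xor_indep_Suc:
  "xor_indep (w(k := t)) (Suc k) \<longleftrightarrow> xor_indep w k \<and> t \<notin> xor_comb w k ` deck k"
proof -
  have low: "xor_comb (w(k := t)) (Suc k) z = xor_comb w k z" if "z \<in> deck k" for z
    using not_bit_deck[OF that] by (simp add: xor_comb_fun_upd)
  have high: "xor_comb (w(k := t)) (Suc k) (2 ^ k + z) = xor t (xor_comb w k z)"
    if "z \<in> deck k" for z
    using bit_power_add_deck[OF that] by (simp add: xor_comb_fun_upd xor_comb_power_add)
  have "xor_indep (w(k := t)) (Suc k) \<longleftrightarrow>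
      (\<forall>z\<in>deck k. xor_comb (w(k := t)) (Suc k) z = 0 \<longrightarrow> z = 0) \<and>
      (\<forall>z\<in>deck k. xor_comb (w(k := t)) (Suc k) (2 ^ k + z) = 0 \<longrightarrow> 2 ^ k + z = 0)"
    unfolding xor_indep_def deck_Suc ball_Un ball_simps(9) ..
  also have "\<dots> \<longleftrightarrow> xor_indep w k \<and> (\<forall>z\<in>deck k. xor t (xor_comb w k z) \<noteq> 0)"
    by (simp del: xor_comb.simps add: low high xor_indep_def)
  finally show ?thesis
    by (auto simp: xor_eq_0_iff_nat)
qed

definition indep_tuples :: "nat \<Rightarrow> nat \<Rightarrow> (nat \<Rightarrow> nat) set" where
  "indep_tuples n k = {w \<in> {..<k} \<rightarrow>\<^sub>E deck n. xor_indep w k}"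

lemma finite_indep_tuples: "finite (indep_tuples n k)"
  unfolding indep_tuples_def
  by (rule finite_subset[OF _ finite_PiE[of "{..<k}" "\<lambda>_. deck n"]]) (auto simp: deck_def)

lemma card_deck_diff_span:
  assumes "w \<in> indep_tuples n k"
  shows "card (deck n - xor_comb w k ` deck k) = 2 ^ n - 2 ^ k"
proof -
  have "xor_comb w k ` deck k \<subseteq> deck n"
    using assms by (auto intro!: xor_comb_mem_deck simp: indep_tuples_def)
  moreover have "card (xor_comb w k ` deck k) = card (deck k)"
    using assms by (intro card_image) (simp add: indep_tuples_def xor_indep_inj_on)
  ultimately show ?thesis
    by (simp add: card_Diff_subset deck_def)
qed

lemma indep_tuples_Suc:
  "indep_tuples n (Suc k) =
     (\<lambda>(w, t). w(k := t)) ` (SIGMA w:indep_tuples n k. deck n - xor_comb w k ` deck k)"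
proof (intro set_eqI iffI)
  fix v assume v: "v \<in> indep_tuples n (Suc k)"
  let ?w = "v(k := undefined)"
  have "v = ?w(k := v k)" by simp
  then have "xor_indep ?w k \<and> v k \<notin> xor_comb ?w k ` deck k"
    using v xor_indep_Suc unfolding indep_tuples_def by (metis (mono_tags, lifting) mem_Collect_eq)
  moreover have "?w \<in> {..<k} \<rightarrow>\<^sub>E deck n" "v k \<in> deck n"
    using v unfolding indep_tuples_def by (auto simp: PiE_iff extensional_def)
  ultimately show "v \<in> (\<lambda>(w, t). w(k := t)) `
      (SIGMA w:indep_tuples n k. deck n - xor_comb w k ` deck k)"
    unfolding indep_tuples_def by (intro image_eqI[of _ _ "(?w, v k)"]) auto
next
  fix v
  assume "v \<in> (\<lambda>(w, t). w(k := t)) ` (SIGMA w:indep_tuples n k. deck n - xor_comb w k ` deck k)"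
  then show "v \<in> indep_tuples n (Suc k)"
    unfolding indep_tuples_def by (auto simp: xor_indep_Suc PiE_iff extensional_def)
qed

lemma inj_on_fun_upd_indep_tuples:
  "inj_on (\<lambda>(w, t). w(k := t)) (SIGMA w:indep_tuples n k. T w)"
proof (rule inj_onI)
  fix x y
  assume x: "x \<in> (SIGMA w:indep_tuples n k. T w)" and y: "y \<in> (SIGMA w:indep_tuples n k. T w)"
    and upd: "(\<lambda>(w, t). w(k := t)) x = (\<lambda>(w, t). w(k := t)) y"
  obtain w t w' t' where xy: "x = (w, t)" "y = (w', t')"
    by fastforce
  have "w k = undefined" "w' k = undefined"
    using x y xy by (auto simp: indep_tuples_def intro: PiE_arb)
  then have "w i = w' i \<and> t = t'" for i
    using fun_cong[OF upd, of i] fun_cong[OF upd, of k] xy by (cases "i = k") simp_all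
  then show "x = y"
    using xy by auto
qed

lemma card_indep_tuples: "k \<le> n \<Longrightarrow> card (indep_tuples n k) = (\<Prod>i<k. 2 ^ n - 2 ^ i)"
proof (induction k)
  case 0
  have "indep_tuples n 0 = {\<lambda>_. undefined}"
    by (auto simp: indep_tuples_def xor_indep_def deck_def)
  then show ?case by simp
next
  case (Suc k)
  have "card (indep_tuples n (Suc k)) =
      card (SIGMA w:indep_tuples n k. deck n - xor_comb w k ` deck k)"
    unfolding indep_tuples_Suc by (rule card_image[OF inj_on_fun_upd_indep_tuples])
  also have "\<dots> = (\<Sum>w\<in>indep_tuples n k. card (deck n - xor_comb w k ` deck k))"
    by (simp add: finite_indep_tuples deck_def)
  also have "\<dots> = card (indep_tuples n k) * (2 ^ n - 2 ^ k)"
    by (simp add: card_deck_diff_span)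
  finally show ?case using Suc by simp
qed

lemma indep_tuples_extend:
  assumes "w \<in> indep_tuples n k" "k \<le> m" "m \<le> n"
  shows "\<exists>w'\<in>indep_tuples n m. \<forall>i<k. w' i = w i"
  using assms(2,3)
proof (induction m rule: dec_induct)
  case base
  then show ?case using assms(1) by auto
next
  case (step m)
  then obtain w' where w': "w' \<in> indep_tuples n m" "\<forall>i<k. w' i = w i" by auto
  have "(2::nat) ^ m < 2 ^ n" using step by simp
  then have "card (deck n - xor_comb w' m ` deck m) \<noteq> 0"
    using card_deck_diff_span[OF w'(1)] by simp
  then have "deck n - xor_comb w' m ` deck m \<noteq> {}"
    by force
  then obtain t where "t \<in> deck n - xor_comb w' m ` deck m" by blast
  then have "w'(m := t) \<in> indep_tuples n (Suc m)"
    using w'(1) unfolding indep_tuples_Suc by (intro image_eqI[of _ _ "(w', t)"]) auto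
  then show ?case using w'(2) step by (intro bexI[of _ "w'(m := t)"]) auto
qed

lemma exists_xor_linear_bij:
  assumes "w \<in> indep_tuples n k" "k \<le> n"
  obtains L where "bij_betw L (deck n) (deck n)" "\<And>x y. L (xor x y) = xor (L x) (L y)"
    "\<And>i. i < k \<Longrightarrow> L (2 ^ i) = w i"
proof -
  obtain w' where w': "w' \<in> indep_tuples n n" "\<forall>i<k. w' i = w i"
    using indep_tuples_extend[OF assms order_refl] by blast
  let ?L = "xor_comb w' n"
  have "inj_on ?L (deck n)"
    using w'(1) by (simp add: indep_tuples_def xor_indep_inj_on)
  moreover have "?L ` deck n \<subseteq> deck n"
    using w'(1) by (auto intro!: xor_comb_mem_deck simp: indep_tuples_def)
  ultimately have bij: "bij_betw ?L (deck n) (deck n)"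
    by (simp add: bij_betw_def endo_inj_surj deck_def)
  have power: "?L (2 ^ i) = w i" if "i < k" for i
    using that assms(2) w'(2) by (simp add: xor_comb_power)
  show ?thesis
    using bij xor_comb_xor power by (rule that)
qed

section \<open>Relabelling quad squares by affine maps\<close>

definition quad_preserving :: "nat \<Rightarrow> (nat \<Rightarrow> nat) \<Rightarrow> bool" where
  "quad_preserving n g \<longleftrightarrow> bij_betw g (deck n) (deck n) \<and>
     (\<forall>p\<in>deck n. \<forall>q\<in>deck n. \<forall>r\<in>deck n. \<forall>s\<in>deck n.
        is_quad (g p) (g q) (g r) (g s) \<longleftrightarrow> is_quad p q r s)"

lemma quad_preserving_affine:
  assumes L: "bij_betw L (deck n) (deck n)" "\<And>x y. L (xor x y) = xor (L x) (L y)"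
    and a: "a \<in> deck n"
  shows "quad_preserving n (\<lambda>x. xor a (L x))"
proof -
  have L_0: "L 0 = 0"
    using L(2)[of 0 0] by simp
  have L_eq_0_iff: "L x = 0 \<longleftrightarrow> x = 0" if "x \<in> deck n" for x
    using L(1) L_0 that by (metis bij_betw_imp_inj_on inj_onD zero_mem_deck)
  have "inj_on (\<lambda>x. xor a (L x)) (deck n)"
    using bij_betw_imp_inj_on[OF L(1)] by (metis (no_types, lifting) inj_on_def xor_left_self_nat)
  moreover have "(\<lambda>x. xor a (L x)) ` deck n \<subseteq> deck n"
    using a L(1) by (auto intro: xor_mem_deck dest: bij_betwE)
  ultimately have "bij_betw (\<lambda>x. xor a (L x)) (deck n) (deck n)"
    by (simp add: bij_betw_def endo_inj_surj deck_def)
  moreover have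
    "is_quad (xor a (L p)) (xor a (L q)) (xor a (L r)) (xor a (L s)) \<longleftrightarrow> is_quad p q r s"
    if "p \<in> deck n" "q \<in> deck n" "r \<in> deck n" "s \<in> deck n" for p q r s
  proof -
    have "xor (xor (xor (xor a (L p)) (xor a (L q))) (xor a (L r))) (xor a (L s))
        = L (xor (xor (xor p q) r) s)"
      by (simp add: L(2) ac_simps)
    then show ?thesis
      unfolding is_quad_def using that by (simp add: L_eq_0_iff xor_mem_deck)
  qed
  ultimately show ?thesis
    by (simp add: quad_preserving_def)
qed

definition relabel :: "(nat \<Rightarrow> nat) \<Rightarrow> (nat \<times> nat \<Rightarrow> nat) \<Rightarrow> (nat \<times> nat \<Rightarrow> nat)" where
  "relabel g Q = restrict (g \<circ> Q) positions"

lemma positions_iff [simp]: "(i, j) \<in> positions \<longleftrightarrow> i < 4 \<and> j < 4"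
  by (simp add: positions_def)

lemma relabel_apply [simp]: "p \<in> positions \<Longrightarrow> relabel g Q p = g (Q p)"
  by (simp add: relabel_def)

lemma quad_square_mem_deck: "quad_square n Q \<Longrightarrow> p \<in> positions \<Longrightarrow> Q p \<in> deck n"
  by (auto simp: quad_square_def)

lemma quad_square_relabel:
  assumes "bij_betw g (deck n) (deck n)" "quad_square n Q"
  shows "quad_square n (relabel g Q)"
proof -
  have "relabel g Q \<in> positions \<rightarrow>\<^sub>E deck n"
    using bij_betwE[OF assms(1)] quad_square_mem_deck[OF assms(2)] by (auto simp: relabel_def)
  moreover have "inj_on (g \<circ> Q) positions"
  proof (rule comp_inj_on)
    show "inj_on Q positions"
      using assms(2) by (simp add: quad_square_def)
    have "Q ` positions \<subseteq> deck n"
      using quad_square_mem_deck[OF assms(2)] by blast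
    then show "inj_on g (Q ` positions)"
      using bij_betw_imp_inj_on[OF assms(1)] by (rule inj_on_subset[rotated])
  qed
  then have "inj_on (relabel g Q) positions"
    by (simp add: relabel_def inj_on_def)
  ultimately show ?thesis
    by (simp add: quad_square_def)
qed

lemma relabel_relabel_cancel:
  assumes "quad_square n Q" "\<And>x. x \<in> deck n \<Longrightarrow> f (f' x) = x"
  shows "relabel f (relabel f' Q) = Q"
proof
  fix p show "relabel f (relabel f' Q) p = Q p"
  proof (cases "p \<in> positions")
    case True
    then have "Q p \<in> deck n"
      using assms(1) by (rule quad_square_mem_deck[rotated])
    then show ?thesis
      using True assms(2) by simp
  next
    case False
    then have "Q p = undefined"
      using assms(1) unfolding quad_square_def by (meson PiE_arb)
    then show ?thesis
      using False by (simp add: relabel_def)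
  qed
qed

lemma bij_betw_relabel:
  assumes g: "bij_betw g (deck n) (deck n)"
    and P: "\<And>Q. quad_square n Q \<Longrightarrow> P (relabel g Q) = P Q"
  shows "bij_betw (relabel g) {Q. quad_square n Q \<and> P Q} {Q. quad_square n Q \<and> P Q}"
proof -
  define h where "h = inv_into (deck n) g"
  have h: "bij_betw h (deck n) (deck n)"
    unfolding h_def by (rule bij_betw_inv_into[OF g])
  have hg: "relabel h (relabel g Q) = Q" if "quad_square n Q" for Q
    using that by (rule relabel_relabel_cancel) (simp add: h_def bij_betw_inv_into_left[OF g])
  have gh: "relabel g (relabel h Q) = Q" if "quad_square n Q" for Q
    using that by (rule relabel_relabel_cancel) (simp add: h_def bij_betw_inv_into_right[OF g])
  show ?thesis
  proof (rule bij_betw_byWitness[where f' = "relabel h"])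
    show "\<forall>Q\<in>{Q. quad_square n Q \<and> P Q}. relabel h (relabel g Q) = Q"
      using hg by blast
    show "\<forall>Q\<in>{Q. quad_square n Q \<and> P Q}. relabel g (relabel h Q) = Q"
      using gh by blast
    show "relabel g ` {Q. quad_square n Q \<and> P Q} \<subseteq> {Q. quad_square n Q \<and> P Q}"
    proof clarify
      fix Q assume Q: "quad_square n Q" "P Q"
      then show "quad_square n (relabel g Q) \<and> P (relabel g Q)"
        using quad_square_relabel[OF g Q(1)] P[OF Q(1)] by simp
    qed
    show "relabel h ` {Q. quad_square n Q \<and> P Q} \<subseteq> {Q. quad_square n Q \<and> P Q}"
    proof clarify
      fix Q assume Q: "quad_square n Q" "P Q"
      have "quad_square n (relabel h Q)"
        using h Q(1) by (rule quad_square_relabel)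
      moreover have "P (relabel h Q)"
        using P[OF calculation] gh[OF Q(1)] Q(2) by simp
      ultimately show "quad_square n (relabel h Q) \<and> P (relabel h Q)" ..
    qed
  qed
qed

lemma is_quad_comp:
  assumes "quad_preserving n g" "quad_square n Q"
    and "p1 \<in> positions" "p2 \<in> positions" "p3 \<in> positions" "p4 \<in> positions"
  shows "is_quad (g (Q p1)) (g (Q p2)) (g (Q p3)) (g (Q p4)) \<longleftrightarrow>
    is_quad (Q p1) (Q p2) (Q p3) (Q p4)"
  using assms quad_square_mem_deck[OF assms(2)] by (simp add: quad_preserving_def)

lemma semimagic_relabel:
  "quad_preserving n g \<Longrightarrow> quad_square n Q \<Longrightarrow> semimagic (relabel g Q) = semimagic Q"
  unfolding semimagic_def by (simp add: is_quad_comp)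

lemma magic_relabel:
  "quad_preserving n g \<Longrightarrow> quad_square n Q \<Longrightarrow> magic (relabel g Q) = magic Q"
  unfolding magic_def by (simp add: is_quad_comp semimagic_relabel)

lemma strongly_magic_relabel:
  "quad_preserving n g \<Longrightarrow> quad_square n Q \<Longrightarrow> strongly_magic (relabel g Q) = strongly_magic Q"
  unfolding strongly_magic_def by (simp add: is_quad_comp)

lemma magic_imp_semimagic: "magic Q \<Longrightarrow> semimagic Q"
  by (simp add: magic_def)

lemma strongly_magic_imp_semimagic:
  assumes "strongly_magic Q"
  shows "semimagic Q"
proof -
  have quad: "is_quad (Q p1) (Q p2) (Q p3) (Q p4)"
    if "p1 \<in> positions" "p2 \<in> positions" "p3 \<in> positions" "p4 \<in> positions"
      "distinct [p1, p2, p3, p4]"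
      "xor (xor (xor (fst p1) (fst p2)) (fst p3)) (fst p4) = 0"
      "xor (xor (xor (snd p1) (snd p2)) (snd p3)) (snd p4) = 0" for p1 p2 p3 p4
    using assms that unfolding strongly_magic_def by blast
  show ?thesis
    unfolding semimagic_def by (auto intro: quad)
qed

lemma is_quad_imp_eq: "is_quad a b c d \<Longrightarrow> d = xor (xor a b) c"
  unfolding is_quad_def by (metis xor_eq_0_iff_nat)

lemma semimagic_first_row_col:
  assumes "semimagic Q"
  shows "Q (0, 3) = xor (xor (Q (0, 0)) (Q (0, 1))) (Q (0, 2))"
    and "Q (3, 0) = xor (xor (Q (0, 0)) (Q (1, 0))) (Q (2, 0))"
  using assms unfolding semimagic_def by (auto intro: is_quad_imp_eq)

section \<open>Frames of semimagic squares\<close>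

lemma all_less_4: "(\<forall>i<(4::nat). P i) \<longleftrightarrow> P 0 \<and> P 1 \<and> P 2 \<and> P 3"
  by (auto simp: less_Suc_eq numeral_eq_Suc)

definition frame :: "(nat \<times> nat \<Rightarrow> nat) \<Rightarrow> nat \<times> (nat \<Rightarrow> nat)" where
  "frame Q = (Q (0, 0), \<lambda>i\<in>{..<4}. xor (Q (0, 0)) (Q ([(0, 1), (0, 2), (1, 0), (2, 0)] ! i)))"

lemma frame_eq_iff:
  assumes "w \<in> extensional {..<4}"
  shows "frame Q = (a, w) \<longleftrightarrow> Q (0, 0) = a \<and> xor a (Q (0, 1)) = w 0 \<and>
    xor a (Q (0, 2)) = w 1 \<and> xor a (Q (1, 0)) = w 2 \<and> xor a (Q (2, 0)) = w 3"
proof -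
  have "(\<lambda>i\<in>{..<4}. xor a (Q ([(0, 1), (0, 2), (1, 0), (2, 0)] ! i))) = w \<longleftrightarrow>
      (\<forall>i<4. xor a (Q ([(0, 1), (0, 2), (1, 0), (2, 0)] ! i)) = w i)"
    using assms by (auto simp: fun_eq_iff extensional_def)
  then show ?thesis
    unfolding frame_def all_less_4 by auto
qed

lemma xor_comb_4:
  "xor_comb w 4 z = xor (if bit z 3 then w 3 else 0) (xor (if bit z 2 then w 2 else 0)
     (xor (if bit z 1 then w 1 else 0) (if bit z 0 then w 0 else 0)))"
  by (simp add: numeral_eq_Suc)

lemma xor_comb_frame:
  assumes "semimagic Q" "z < 16"
  shows "xor_comb (snd (frame Q)) 4 z = xor (Q (0, z mod 4)) (Q (z div 4, 0))"
proof -
  have w: "snd (frame Q) 0 = xor (Q (0, 0)) (Q (0, 1))" "snd (frame Q) 1 = xor (Q (0, 0)) (Q (0, 2))"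
    "snd (frame Q) 2 = xor (Q (0, 0)) (Q (1, 0))" "snd (frame Q) 3 = xor (Q (0, 0)) (Q (2, 0))"
    by (simp_all add: frame_def)
  have "z \<in> {0, 1, 2, 3, 4, 5, 6, 7, 8, 9, 10, 11, 12, 13, 14, 15}"
    unfolding insert_iff empty_iff using assms(2) by presburger
  then show ?thesis
    unfolding xor_comb_4 w
    by (elim insertE emptyE)
      (simp_all add: semimagic_first_row_col[OF assms(1)] bit_iff_odd
        xor.assoc xor.commute xor.left_commute)
qed

lemma frame_mem:
  assumes Q: "quad_square n Q" "semimagic Q"
  shows "frame Q \<in> deck n \<times> indep_tuples n 4"
proof -
  have deck: "Q p \<in> deck n" if "p \<in> positions" for p
    using Q(1) that by (rule quad_square_mem_deck)
  have "\<forall>i<4. snd (frame Q) i \<in> deck n"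
    unfolding all_less_4 by (simp add: frame_def xor_mem_deck deck)
  then have "snd (frame Q) \<in> {..<4} \<rightarrow>\<^sub>E deck n"
    by (simp add: PiE_iff frame_def)
  moreover have "xor_indep (snd (frame Q)) 4"
    unfolding xor_indep_def
  proof (intro ballI impI)
    fix z assume "z \<in> deck 4" "xor_comb (snd (frame Q)) 4 z = 0"
    then have "Q (0, z mod 4) = Q (z div 4, 0)" "z < 16"
      using xor_comb_frame[OF Q(2)] by (auto simp: deck_def xor_eq_0_iff_nat)
    then have "(0, z mod 4) = (z div 4, 0)"
      using Q(1) unfolding quad_square_def by (auto dest: inj_onD)
    then show "z = 0"
      using div_mult_mod_eq[of z 4] by simp
  qed
  ultimately show ?thesis
    using deck[of "(0, 0)"] by (simp add: frame_def indep_tuples_def)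
qed

lemma type_C_iff_frame:
  assumes "semimagic Q"
  shows "type_C Q \<longleftrightarrow> frame Q = (0, \<lambda>i\<in>{..<4}. 2 ^ i)"
  using semimagic_first_row_col[OF assms] by (auto simp: type_C_def all_less_4 frame_eq_iff)

lemma frame_relabel_eq_iff:
  assumes g: "inj_on g (deck n)" "g 0 = a" "\<And>i. i < 4 \<Longrightarrow> g (2 ^ i) = xor a (w i)"
    and w: "w \<in> extensional {..<4}" and n: "4 \<le> n" and Q: "quad_square n Q"
  shows "frame (relabel g Q) = (a, w) \<longleftrightarrow> frame Q = (0, \<lambda>i\<in>{..<4}. 2 ^ i)"
proof -
  have "(2::nat) ^ 4 \<le> 2 ^ n"
    using n by (rule power_increasing) simp
  then have deck: "0 \<in> deck n" "1 \<in> deck n" "2 \<in> deck n" "4 \<in> deck n" "8 \<in> deck n"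
    by (simp_all add: deck_def)
  have Q_deck: "Q p \<in> deck n" if "p \<in> positions" for p
    using Q that by (rule quad_square_mem_deck)
  have w_eq: "w 0 = xor a (g 1)" "w 1 = xor a (g 2)" "w 2 = xor a (g 4)" "w 3 = xor a (g 8)"
    using g(3)[of 0] g(3)[of 1] g(3)[of 2] g(3)[of 3] by simp_all
  have "frame (relabel g Q) = (a, w) \<longleftrightarrow>
      g (Q (0, 0)) = g 0 \<and> g (Q (0, 1)) = g 1 \<and> g (Q (0, 2)) = g 2 \<and>
      g (Q (1, 0)) = g 4 \<and> g (Q (2, 0)) = g 8"
    unfolding frame_eq_iff[OF w] w_eq g(2)[symmetric] by (simp add: xor_left_cancel_nat)
  also have "\<dots> \<longleftrightarrow>
      Q (0, 0) = 0 \<and> Q (0, 1) = 1 \<and> Q (0, 2) = 2 \<and> Q (1, 0) = 4 \<and> Q (2, 0) = 8"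
    using deck Q_deck by (simp add: inj_on_eq_iff[OF g(1)])
  also have "\<dots> \<longleftrightarrow> frame Q = (0, \<lambda>i\<in>{..<4}. 2 ^ i)"
    by (simp add: frame_eq_iff)
  finally show ?thesis .
qed

lemma card_frame_fibre:
  assumes n: "4 \<le> n"
    and P: "\<And>g Q. quad_preserving n g \<Longrightarrow> quad_square n Q \<Longrightarrow> P (relabel g Q) = P Q"
    and f: "f \<in> deck n \<times> indep_tuples n 4"
  shows "card {Q. quad_square n Q \<and> P Q \<and> frame Q = f} =
    card {Q. quad_square n Q \<and> P Q \<and> frame Q = (0, \<lambda>i\<in>{..<4}. 2 ^ i)}"
proof -
  obtain a w where f_eq: "f = (a, w)" and a: "a \<in> deck n" and w: "w \<in> indep_tuples n 4"
    using f by blast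
  obtain L where L: "bij_betw L (deck n) (deck n)" "\<And>x y. L (xor x y) = xor (L x) (L y)"
    and L_w: "\<And>i. i < 4 \<Longrightarrow> L (2 ^ i) = w i"
    using exists_xor_linear_bij[OF w n] by blast
  define g where "g x = xor a (L x)" for x
  have g: "quad_preserving n g"
    unfolding g_def using L a by (rule quad_preserving_affine)
  then have g_bij: "bij_betw g (deck n) (deck n)"
    by (simp add: quad_preserving_def)
  let ?S = "{Q. quad_square n Q \<and> P Q}"
  have bij: "bij_betw (relabel g) ?S ?S"
    using g_bij P[OF g] by (rule bij_betw_relabel)
  have "g 0 = a"
    using L(2)[of 0 0] by (simp add: g_def)
  then have fibre:
      "{Q \<in> ?S. frame (relabel g Q) = f} = {Q \<in> ?S. frame Q = (0, \<lambda>i\<in>{..<4}. 2 ^ i)}"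
    using frame_relabel_eq_iff[OF bij_betw_imp_inj_on[OF g_bij]] L_w w n
    by (auto simp: f_eq g_def indep_tuples_def PiE_iff)
  have image: "relabel g ` {Q \<in> ?S. frame (relabel g Q) = f} = {Q \<in> ?S. frame Q = f}"
    using bij by (auto simp: bij_betw_def)
  have "bij_betw (relabel g) {Q \<in> ?S. frame (relabel g Q) = f} {Q \<in> ?S. frame Q = f}"
    by (rule bij_betw_subset[OF bij _ image]) blast
  then show ?thesis
    unfolding fibre by (simp add: bij_betw_same_card conj_assoc)
qed

lemma card_quad_squares_eq:
  assumes n: "4 \<le> n"
    and semimagic: "\<And>Q. P Q \<Longrightarrow> semimagic Q"
    and P: "\<And>g Q. quad_preserving n g \<Longrightarrow> quad_square n Q \<Longrightarrow> P (relabel g Q) = P Q"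
  shows "card {Q. quad_square n Q \<and> P Q} =
    2 ^ n * (2 ^ n - 1) * (2 ^ n - 2) * (2 ^ n - 4) * (2 ^ n - 8) *
    card {Q. quad_square n Q \<and> P Q \<and> type_C Q}"
proof -
  let ?S = "{Q. quad_square n Q \<and> P Q}"
  let ?frames = "deck n \<times> indep_tuples n 4"
  let ?C = "(0, \<lambda>i\<in>{..<4}. 2 ^ i) :: nat \<times> (nat \<Rightarrow> nat)"
  have "finite (positions \<rightarrow>\<^sub>E deck n)"
    by (simp add: finite_PiE positions_def deck_def)
  then have "finite ?S"
    by (rule finite_subset[rotated]) (auto simp: quad_square_def)
  moreover have "finite ?frames"
    by (simp add: finite_indep_tuples deck_def)
  moreover have "frame ` ?S \<subseteq> ?frames"
    using frame_mem semimagic by blast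
  ultimately have "card ?S = (\<Sum>f\<in>?frames. card {Q \<in> ?S. frame Q = f})"
    unfolding card_eq_sum by (rule sum.group[symmetric])
  also have "\<dots> = card ?frames * card {Q \<in> ?S. frame Q = ?C}"
    using card_frame_fibre[OF n P] by (simp add: conj_assoc)
  also have "{Q \<in> ?S. frame Q = ?C} = {Q. quad_square n Q \<and> P Q \<and> type_C Q}"
    using type_C_iff_frame semimagic by blast
  also have "card ?frames = 2 ^ n * (\<Prod>i<4. 2 ^ n - 2 ^ i)"
    using card_indep_tuples[OF n] by (simp add: card_cartesian_product deck_def)
  finally show ?thesis
    by (simp add: numeral_eq_Suc mult.assoc)
qed

theorem mainTheorem1:
  fixes n :: nat
  assumes "n \<ge> 4"
  shows "(card {Q. quad_square n Q \<and> semimagic Q} =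
           2^n * (2^n - 1) * (2^n - 2) * (2^n - 4) * (2^n - 8) *
           card {Q. quad_square n Q \<and> semimagic Q \<and> type_C Q}) \<and>
         (card {Q. quad_square n Q \<and> magic Q} =
           2^n * (2^n - 1) * (2^n - 2) * (2^n - 4) * (2^n - 8) *
           card {Q. quad_square n Q \<and> magic Q \<and> type_C Q}) \<and>
         (card {Q. quad_square n Q \<and> strongly_magic Q} =
           2^n * (2^n - 1) * (2^n - 2) * (2^n - 4) * (2^n - 8) *
           card {Q. quad_square n Q \<and> strongly_magic Q \<and> type_C Q})"
  using card_quad_squares_eq[OF assms _ semimagic_relabel[of n]]
    card_quad_squares_eq[OF assms magic_imp_semimagic magic_relabel[of n]]
    card_quad_squares_eq[OF assms strongly_magic_imp_semimagic strongly_magic_relabel[of n]]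
  by blast

end
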